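(* For every Euler–Venn diagram $d$ and all finite multisets $\Gamma,\Delta$ of compound diagrams, the following rules are sound (validity of all premisses implies validity of the conclusion): $(\mathrm{det}L)$ from $d,\Gamma\Rightarrow E(d)$ and $V(d),\Gamma\Rightarrow\Delta$ infer $d,\Gamma\Rightarrow\Delta$; $(\mathrm{det}R)$ from $E(d),\Gamma\Rightarrow V(d)$ infer $\Gamma\Rightarrow\Delta,d$.
   Context: Fix a countably infinite set $\mathcal V$ of propositional variables. A Heyting algebra $(H,\vee,\wedge,\to,0,1)$ is a bounded distributive lattice with a binary operation $\to$ such that $c\wedge a\le b\iff c\le a\to b$; $-a:=a\to0$; empty meets are $1$, empty joins $0$. A valuation is a map $v:\mathcal V\to H$. For a finite $L\subset\mathcal V$, a zone over $L$ is a pair $z=(\mathrm{in}(z),\mathrm{out}(z))$ of disjoint subsets of $L$ with union $L$; $\mathcal Z(L)$ is the set of all zones over $L$; $v(z)=\bigwedge_{c\in\mathrm{in}(z)}v(c)\wedge\bigwedge_{c\in\mathrm{out}(z)}-v(c)$ and $m_v(z)=\big(\bigwedge_{c\in\mathrm{in}(z)}v(c)\big)\to\big(\bigvee_{c\in\mathrm{out}(z)}v(c)\big)$. Unitary diagrams are of three kinds: Venn diagrams $d=(L,\mathcal Z(L),S)$, $S\subseteq\mathcal Z(L)$ shaded, $[\![d]\!]_v=\bigvee_{z\in S}v(z)$; pure Euler diagrams $d=(L,Z)$, $Z\subseteq\mathcal Z(L)$ visible zones, missing zones $M(d)=\mathcal Z(L)\setminus Z$, $[\![d]\!]_v=\bigwedge_{z\in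 M(d)}m_v(z)$; Euler–Venn diagrams $d=(L,Z,S)$ with $S\subseteq Z\subseteq\mathcal Z(L)$, with associated pure Euler diagram $E(d)=(L,Z)$ and Venn diagram $V(d)=(L,\mathcal Z(L),S)$, and $[\![d]\!]_v=[\![E(d)]\!]_v\to[\![V(d)]\!]_v$. Compound diagrams are built from unitary ones with $\wedge,\vee,\to$, interpreted by meet, join and Heyting implication. A sequent $\Gamma\Rightarrow\Delta$ (finite multisets of compound diagrams) is valid iff for every Heyting algebra and valuation $v$, $\bigwedge_{D\in\Gamma}[\![D]\!]_v\le\bigvee_{E\in\Delta}[\![E]\!]_v$. *)

theory Defs
  imports Main "HOL-Library.Multiset"
begin

record 'a halg =
  carrier :: "'a set"
  hjoin :: "'a \<Rightarrow> 'a \<Rightarrow> 'a"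
  hmeet :: "'a \<Rightarrow> 'a \<Rightarrow> 'a"
  himp  :: "'a \<Rightarrow> 'a \<Rightarrow> 'a"
  hbot  :: 'a
  htop  :: 'a

definition hle :: "'a halg \<Rightarrow> 'a \<Rightarrow> 'a \<Rightarrow> bool" where
  "hle H a b \<longleftrightarrow> hmeet H a b = a"

definition heyting :: "'a halg \<Rightarrow> bool" where
  "heyting H \<longleftrightarrow>
     hbot H \<in> carrier H \<and> htop H \<in> carrier H \<and>
     (\<forall>a\<in>carrier H. \<forall>b\<in>carrier H.
        hjoin H a b \<in> carrier H \<and> hmeet H a b \<in> carrier H \<and> himp H a b \<in> carrier H) \<and>
     (\<forall>a\<in>carrier H. \<forall>b\<in>carrier H.
        hjoin H a b = hjoin H b a \<and> hmeet H a b = hmeet H b a \<and>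
        hjoin H a (hmeet H a b) = a \<and> hmeet H a (hjoin H a b) = a) \<and>
     (\<forall>a\<in>carrier H. \<forall>b\<in>carrier H. \<forall>c\<in>carrier H.
        hjoin H a (hjoin H b c) = hjoin H (hjoin H a b) c \<and>
        hmeet H a (hmeet H b c) = hmeet H (hmeet H a b) c \<and>
        hmeet H a (hjoin H b c) = hjoin H (hmeet H a b) (hmeet H a c)) \<and>
     (\<forall>a\<in>carrier H. hjoin H a (hbot H) = a \<and> hmeet H a (htop H) = a) \<and>
     (\<forall>a\<in>carrier H. \<forall>b\<in>carrier H. \<forall>c\<in>carrier H.
        hle H (hmeet H c a) b \<longleftrightarrow> hle H c (himp H a b))"

definition hneg :: "'a halg \<Rightarrow> 'a \<Rightarrow> 'a" where
  "hneg H a = himp H a (hbot H)"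

definition bigmeet :: "'a halg \<Rightarrow> ('b \<Rightarrow> 'a) \<Rightarrow> 'b set \<Rightarrow> 'a" where
  "bigmeet H f S = Finite_Set.fold (\<lambda>x acc. hmeet H (f x) acc) (htop H) S"

definition bigjoin :: "'a halg \<Rightarrow> ('b \<Rightarrow> 'a) \<Rightarrow> 'b set \<Rightarrow> 'a" where
  "bigjoin H f S = Finite_Set.fold (\<lambda>x acc. hjoin H (f x) acc) (hbot H) S"

definition mmeet :: "'a halg \<Rightarrow> 'a multiset \<Rightarrow> 'a" where
  "mmeet H M = fold_mset (hmeet H) (htop H) M"

definition mjoin :: "'a halg \<Rightarrow> 'a multiset \<Rightarrow> 'a" where
  "mjoin H M = fold_mset (hjoin H) (hbot H) M"

type_synonym var = nat
type_synonym zone = "var set \<times> var set"  \<comment> \<open>(in z, out z)\<close>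

definition zones :: "var set \<Rightarrow> zone set" where
  "zones L = {(I, Ou). I \<inter> Ou = {} \<and> I \<union> Ou = L}"

datatype unitary =
    Venn "var set" "zone set"               \<comment> \<open>(L, Z(L), S): labels, shaded zones\<close>
  | Euler "var set" "zone set"              \<comment> \<open>(L, Z): labels, visible zones\<close>
  | EulerVenn "var set" "zone set" "zone set"

datatype diagram =
    Unit unitary
  | DAnd diagram diagram
  | DOr diagram diagram
  | DImp diagram diagram

fun wf_unitary :: "unitary \<Rightarrow> bool" where
  "wf_unitary (Venn L S) \<longleftrightarrow> finite L \<and> S \<subseteq> zones L"
| "wf_unitary (Euler L Z) \<longleftrightarrow> finite L \<and> Z \<subseteq> zones L"
| "wf_unitary (EulerVenn L Z S) \<longleftrightarrow> finite L \<and> S \<subseteq> Z \<and> Z \<subseteq> zones L"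

fun wf_diagram :: "diagram \<Rightarrow> bool" where
  "wf_diagram (Unit u) = wf_unitary u"
| "wf_diagram (DAnd a b) = (wf_diagram a \<and> wf_diagram b)"
| "wf_diagram (DOr a b) = (wf_diagram a \<and> wf_diagram b)"
| "wf_diagram (DImp a b) = (wf_diagram a \<and> wf_diagram b)"

fun is_euler_venn :: "unitary \<Rightarrow> bool" where
  "is_euler_venn (EulerVenn L Z S) = True"
| "is_euler_venn _ = False"

fun E_of :: "unitary \<Rightarrow> unitary" where
  "E_of (EulerVenn L Z S) = Euler L Z"
| "E_of u = u"

fun V_of :: "unitary \<Rightarrow> unitary" where
  "V_of (EulerVenn L Z S) = Venn L S"
| "V_of u = u"

definition zone_val :: "'a halg \<Rightarrow> (var \<Rightarrow> 'a) \<Rightarrow> zone \<Rightarrow> 'a" where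
  "zone_val H v z =
     hmeet H (bigmeet H v (fst z)) (bigmeet H (\<lambda>c. hneg H (v c)) (snd z))"

definition zone_m :: "'a halg \<Rightarrow> (var \<Rightarrow> 'a) \<Rightarrow> zone \<Rightarrow> 'a" where
  "zone_m H v z = himp H (bigmeet H v (fst z)) (bigjoin H v (snd z))"

definition sem_venn :: "'a halg \<Rightarrow> (var \<Rightarrow> 'a) \<Rightarrow> zone set \<Rightarrow> 'a" where
  "sem_venn H v S = bigjoin H (zone_val H v) S"

definition sem_euler :: "'a halg \<Rightarrow> (var \<Rightarrow> 'a) \<Rightarrow> var set \<Rightarrow> zone set \<Rightarrow> 'a" where
  "sem_euler H v L Z = bigmeet H (zone_m H v) (zones L - Z)"

fun sem_unitary :: "'a halg \<Rightarrow> (var \<Rightarrow> 'a) \<Rightarrow> unitary \<Rightarrow> 'a" where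
  "sem_unitary H v (Venn L S) = sem_venn H v S"
| "sem_unitary H v (Euler L Z) = sem_euler H v L Z"
| "sem_unitary H v (EulerVenn L Z S) = himp H (sem_euler H v L Z) (sem_venn H v S)"

fun sem :: "'a halg \<Rightarrow> (var \<Rightarrow> 'a) \<Rightarrow> diagram \<Rightarrow> 'a" where
  "sem H v (Unit u) = sem_unitary H v u"
| "sem H v (DAnd a b) = hmeet H (sem H v a) (sem H v b)"
| "sem H v (DOr a b) = hjoin H (sem H v a) (sem H v b)"
| "sem H v (DImp a b) = himp H (sem H v a) (sem H v b)"

definition valid :: "'a itself \<Rightarrow> diagram multiset \<Rightarrow> diagram multiset \<Rightarrow> bool" where
  "valid _ \<Gamma> \<Delta> \<longleftrightarrow>
     (\<forall>(H :: 'a halg) v. heyting H \<longrightarrow> range v \<subseteq> carrier H \<longrightarrow>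
        hle H (mmeet H (image_mset (sem H v) \<Gamma>)) (mjoin H (image_mset (sem H v) \<Delta>)))"

end

theory Submission
  imports Defs
begin

(* Both rules are instances of the sequent rules for implication: the semantics of an
   Euler-Venn diagram d is the Heyting implication from E(d) to V(d). Rule (detL) is
   then modus ponens, a \<and> (a \<rightarrow> b) \<le> b, followed by a cut, and rule (detR) is the
   adjunction c \<and> a \<le> b \<Longrightarrow> c \<le> a \<rightarrow> b followed by weakening on the right. *)

(* A Heyting algebra here is a structure on a carrier set, so the iterated meets and joins
   of the semantics are folds of operations that are commutative only on that carrier. *)
locale closed_left_commutative =
  fixes C :: "'a set" and g :: "'a \<Rightarrow> 'a \<Rightarrow> 'a"
  assumes closed: "x \<in> C \<Longrightarrow> y \<in> C \<Longrightarrow> g x y \<in> C"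
    and left_commute: "x \<in> C \<Longrightarrow> y \<in> C \<Longrightarrow> z \<in> C \<Longrightarrow> g x (g y z) = g y (g x z)"
begin

(* Being the identity in its second argument off C, the restriction is left-commutative
   everywhere, so the library's fold theory applies to it. *)
definition restricted :: "'a \<Rightarrow> 'a \<Rightarrow> 'a" where
  "restricted x y = (if x \<in> C \<and> y \<in> C then g x y else y)"

lemma restricted_in: "y \<in> C \<Longrightarrow> restricted x y \<in> C"
  by (simp add: restricted_def closed)

sublocale restricted: comp_fun_commute restricted
  by unfold_locales (auto simp: restricted_def fun_eq_iff closed left_commute)

lemma fold_in:
  assumes "\<And>x. x \<in> A \<Longrightarrow> f x \<in> C" and "z \<in> C"
  shows "Finite_Set.fold (\<lambda>x. g (f x)) z A \<in> C"
proof -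
  interpret f_restricted: comp_fun_commute "\<lambda>x. restricted (f x)"
    using restricted.comp_comp_fun_commute[of f] by (simp add: comp_def)
  have "Finite_Set.fold (\<lambda>x. g (f x)) z A = Finite_Set.fold (\<lambda>x. restricted (f x)) z A"
    by (rule fold_closed_eq[where B = C]) (auto simp: restricted_def assms closed)
  moreover have "Finite_Set.fold (\<lambda>x. restricted (f x)) z A \<in> C"
  proof (induction A rule: infinite_finite_induct)
    case (insert x F)
    then show ?case
      by (simp add: restricted_in)
  qed (simp_all add: assms(2))
  ultimately show ?thesis
    by simp
qed

lemma fold_mset_eq_restricted:
  assumes "set_mset M \<subseteq> C" and "z \<in> C"
  shows "fold_mset g z M = fold_mset restricted z M"
  unfolding fold_mset_def
proof (rule fold_closed_eq[where B = C])
  fix a b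
  assume "a \<in> set_mset M" "b \<in> C"
  then have "a \<in> C"
    using assms(1) by auto
  with \<open>b \<in> C\<close> have "(g a ^^ n) b = (restricted a ^^ n) b \<and> (restricted a ^^ n) b \<in> C" for n
    by (induction n) (auto simp: restricted_def closed)
  then show "(g a ^^ count M a) b = (restricted a ^^ count M a) b"
    and "(restricted a ^^ count M a) b \<in> C"
    by blast+
qed (rule assms(2))

lemma fold_mset_restricted_in: "z \<in> C \<Longrightarrow> fold_mset restricted z M \<in> C"
  by (induction M) (simp_all add: restricted_in)

lemma fold_mset_in: "set_mset M \<subseteq> C \<Longrightarrow> z \<in> C \<Longrightarrow> fold_mset g z M \<in> C"
  by (simp add: fold_mset_eq_restricted fold_mset_restricted_in)

lemma fold_mset_add_mset:
  assumes "set_mset M \<subseteq> C" and "z \<in> C" and "x \<in> C"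
  shows "fold_mset g z (add_mset x M) = g x (fold_mset g z M)"
proof -
  have "fold_mset g z (add_mset x M) = restricted x (fold_mset restricted z M)"
    using fold_mset_eq_restricted[of "add_mset x M"] assms by simp
  also have "\<dots> = g x (fold_mset restricted z M)"
    using fold_mset_restricted_in assms by (simp add: restricted_def)
  finally show ?thesis
    using fold_mset_eq_restricted assms by simp
qed

end

locale heyting_algebra =
  fixes H :: "'a halg"
  assumes heyting: "heyting H"
begin

lemma closed:
  "hbot H \<in> carrier H" "htop H \<in> carrier H"
  "a \<in> carrier H \<Longrightarrow> b \<in> carrier H \<Longrightarrow> hjoin H a b \<in> carrier H"
  "a \<in> carrier H \<Longrightarrow> b \<in> carrier H \<Longrightarrow> hmeet H a b \<in> carrier H"
  "a \<in> carrier H \<Longrightarrow> b \<in> carrier H \<Longrightarrow> himp H a b \<in> carrier H"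
  using heyting unfolding heyting_def by blast+

lemma join_comm: "a \<in> carrier H \<Longrightarrow> b \<in> carrier H \<Longrightarrow> hjoin H a b = hjoin H b a"
  using heyting unfolding heyting_def by blast

lemma meet_comm: "a \<in> carrier H \<Longrightarrow> b \<in> carrier H \<Longrightarrow> hmeet H a b = hmeet H b a"
  using heyting unfolding heyting_def by blast

lemma join_meet_absorb: "a \<in> carrier H \<Longrightarrow> b \<in> carrier H \<Longrightarrow> hjoin H a (hmeet H a b) = a"
  using heyting unfolding heyting_def by blast

lemma meet_join_absorb: "a \<in> carrier H \<Longrightarrow> b \<in> carrier H \<Longrightarrow> hmeet H a (hjoin H a b) = a"
  using heyting unfolding heyting_def by blast

lemma join_assoc:
  "a \<in> carrier H \<Longrightarrow> b \<in> carrier H \<Longrightarrow> c \<in> carrier H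
    \<Longrightarrow> hjoin H a (hjoin H b c) = hjoin H (hjoin H a b) c"
  using heyting unfolding heyting_def by blast

lemma meet_assoc:
  "a \<in> carrier H \<Longrightarrow> b \<in> carrier H \<Longrightarrow> c \<in> carrier H
    \<Longrightarrow> hmeet H a (hmeet H b c) = hmeet H (hmeet H a b) c"
  using heyting unfolding heyting_def by blast

lemma join_bot: "a \<in> carrier H \<Longrightarrow> hjoin H a (hbot H) = a"
  using heyting unfolding heyting_def by blast

lemma residuation:
  "a \<in> carrier H \<Longrightarrow> b \<in> carrier H \<Longrightarrow> c \<in> carrier H
    \<Longrightarrow> hle H (hmeet H c a) b \<longleftrightarrow> hle H c (himp H a b)"
  using heyting unfolding heyting_def by blast

lemma meet_left_commute:
  "a \<in> carrier H \<Longrightarrow> b \<in> carrier H \<Longrightarrow> c \<in> carrier H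
    \<Longrightarrow> hmeet H a (hmeet H b c) = hmeet H b (hmeet H a c)"
  by (simp add: meet_assoc meet_comm[of a b])

lemma join_left_commute:
  "a \<in> carrier H \<Longrightarrow> b \<in> carrier H \<Longrightarrow> c \<in> carrier H
    \<Longrightarrow> hjoin H a (hjoin H b c) = hjoin H b (hjoin H a c)"
  by (simp add: join_assoc join_comm[of a b])

sublocale meet: closed_left_commutative "carrier H" "hmeet H"
  by unfold_locales (simp_all add: closed meet_left_commute)

sublocale join: closed_left_commutative "carrier H" "hjoin H"
  by unfold_locales (simp_all add: closed join_left_commute)

lemma meet_idem:
  assumes "a \<in> carrier H"
  shows "hmeet H a a = a"
proof -
  have "hmeet H a a = hmeet H a (hjoin H a (hmeet H a a))"
    using assms by (simp add: join_meet_absorb)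
  also have "\<dots> = a"
    using assms by (simp add: meet_join_absorb closed)
  finally show ?thesis .
qed

lemma le_refl: "a \<in> carrier H \<Longrightarrow> hle H a a"
  by (simp add: hle_def meet_idem)

lemma le_trans:
  assumes "a \<in> carrier H" "b \<in> carrier H" "c \<in> carrier H" "hle H a b" "hle H b c"
  shows "hle H a c"
proof -
  have "hmeet H a c = hmeet H (hmeet H a b) c"
    using assms(4) by (simp add: hle_def)
  also have "\<dots> = hmeet H a (hmeet H b c)"
    using assms(1-3) by (simp add: meet_assoc)
  also have "\<dots> = a"
    using assms(4,5) by (simp add: hle_def)
  finally show ?thesis
    by (simp add: hle_def)
qed

lemma le_meetI:
  assumes "x \<in> carrier H" "a \<in> carrier H" "b \<in> carrier H" "hle H x a" "hle H x b"
  shows "hle H x (hmeet H a b)"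
proof -
  have "hmeet H x (hmeet H a b) = hmeet H (hmeet H x a) b"
    using assms(1-3) by (simp add: meet_assoc)
  also have "\<dots> = x"
    using assms(4,5) by (simp add: hle_def)
  finally show ?thesis
    by (simp add: hle_def)
qed

lemma meet_le1:
  assumes "a \<in> carrier H" "b \<in> carrier H"
  shows "hle H (hmeet H a b) a"
proof -
  have "hmeet H (hmeet H a b) a = hmeet H (hmeet H a a) b"
    using assms by (simp add: meet_comm[of b a] flip: meet_assoc)
  then show ?thesis
    using assms by (simp add: hle_def meet_idem)
qed

lemma meet_le2: "a \<in> carrier H \<Longrightarrow> b \<in> carrier H \<Longrightarrow> hle H (hmeet H a b) b"
  using meet_le1[of b a] by (simp add: meet_comm)

lemma le_join1: "a \<in> carrier H \<Longrightarrow> b \<in> carrier H \<Longrightarrow> hle H a (hjoin H a b)"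
  by (simp add: hle_def meet_join_absorb)

lemma modus_ponens: "a \<in> carrier H \<Longrightarrow> b \<in> carrier H \<Longrightarrow> hle H (hmeet H (himp H a b) a) b"
  using residuation[of a b "himp H a b"] by (simp add: le_refl closed)

lemma imp_left:
  assumes carrier: "a \<in> carrier H" "b \<in> carrier H" "c \<in> carrier H" "r \<in> carrier H"
    and major: "hle H (hmeet H (himp H a b) c) a" and minor: "hle H (hmeet H b c) r"
  shows "hle H (hmeet H (himp H a b) c) r"
proof -
  let ?x = "hmeet H (himp H a b) c"
  have x: "?x \<in> carrier H" and ab: "himp H a b \<in> carrier H"
    using carrier by (simp_all add: closed)
  have "hle H ?x (hmeet H (himp H a b) a)"
    using le_meetI[OF x ab carrier(1) meet_le1[OF ab carrier(3)] major] .
  then have "hle H ?x b"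
    using le_trans[OF x _ carrier(2) _ modus_ponens] carrier by (simp add: closed)
  then have "hle H ?x (hmeet H b c)"
    using le_meetI[OF x carrier(2,3) _ meet_le2[OF ab carrier(3)]] by simp
  then show ?thesis
    using le_trans[OF x _ carrier(4) _ minor] carrier by (simp add: closed)
qed

lemma imp_right:
  assumes carrier: "a \<in> carrier H" "b \<in> carrier H" "c \<in> carrier H" "r \<in> carrier H"
    and premise: "hle H (hmeet H a c) b"
  shows "hle H c (hjoin H (himp H a b) r)"
proof -
  have "hle H c (himp H a b)"
    using premise residuation[OF carrier(1-3)] meet_comm[OF carrier(1,3)] by simp
  then show ?thesis
    using le_trans[OF carrier(3) _ _ _ le_join1] carrier by (simp add: closed)
qed

lemma mmeet_in: "set_mset M \<subseteq> carrier H \<Longrightarrow> mmeet H M \<in> carrier H"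
  unfolding mmeet_def by (simp add: meet.fold_mset_in closed)

lemma mjoin_in: "set_mset M \<subseteq> carrier H \<Longrightarrow> mjoin H M \<in> carrier H"
  unfolding mjoin_def by (simp add: join.fold_mset_in closed)

lemma mmeet_add_mset:
  "set_mset M \<subseteq> carrier H \<Longrightarrow> x \<in> carrier H \<Longrightarrow> mmeet H (add_mset x M) = hmeet H x (mmeet H M)"
  unfolding mmeet_def by (simp add: meet.fold_mset_add_mset closed)

lemma mjoin_add_mset:
  "set_mset M \<subseteq> carrier H \<Longrightarrow> x \<in> carrier H \<Longrightarrow> mjoin H (add_mset x M) = hjoin H x (mjoin H M)"
  unfolding mjoin_def by (simp add: join.fold_mset_add_mset closed)

lemma mjoin_single: "x \<in> carrier H \<Longrightarrow> mjoin H {#x#} = x"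
  by (simp add: mjoin_def join_bot closed)

lemma bigmeet_in: "(\<And>x. x \<in> A \<Longrightarrow> f x \<in> carrier H) \<Longrightarrow> bigmeet H f A \<in> carrier H"
  unfolding bigmeet_def by (simp add: meet.fold_in closed)

lemma bigjoin_in: "(\<And>x. x \<in> A \<Longrightarrow> f x \<in> carrier H) \<Longrightarrow> bigjoin H f A \<in> carrier H"
  unfolding bigjoin_def by (simp add: join.fold_in closed)

context
  fixes v :: "var \<Rightarrow> 'a"
  assumes v: "range v \<subseteq> carrier H"
begin

lemma zone_val_in: "zone_val H v z \<in> carrier H"
  using v unfolding zone_val_def hneg_def by (auto intro!: closed bigmeet_in)

lemma zone_m_in: "zone_m H v z \<in> carrier H"
  using v unfolding zone_m_def by (auto intro!: closed bigmeet_in bigjoin_in)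

lemma sem_in: "sem H v D \<in> carrier H"
proof (induction D)
  case (Unit u)
  then show ?case
    by (cases u) (auto simp: sem_venn_def sem_euler_def
        intro!: closed bigjoin_in bigmeet_in zone_val_in zone_m_in)
qed (simp_all add: closed)

lemma sem_mset_in: "set_mset (image_mset (sem H v) \<Gamma>) \<subseteq> carrier H"
  using sem_in by auto

lemma mmeet_sem_add_mset:
  "mmeet H (add_mset (sem H v D) (image_mset (sem H v) \<Gamma>))
    = hmeet H (sem H v D) (mmeet H (image_mset (sem H v) \<Gamma>))"
  by (rule mmeet_add_mset[OF sem_mset_in sem_in])

lemma mjoin_sem_add_mset:
  "mjoin H (add_mset (sem H v D) (image_mset (sem H v) \<Delta>))
    = hjoin H (sem H v D) (mjoin H (image_mset (sem H v) \<Delta>))"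
  by (rule mjoin_add_mset[OF sem_mset_in sem_in])

lemma mjoin_sem_single: "mjoin H {#sem H v D#} = sem H v D"
  by (simp add: mjoin_single sem_in)

end

end

lemma validD:
  fixes H :: "'a halg"
  assumes "valid TYPE('a) \<Gamma> \<Delta>" and "heyting H" and "range v \<subseteq> carrier H"
  shows "hle H (mmeet H (image_mset (sem H v) \<Gamma>)) (mjoin H (image_mset (sem H v) \<Delta>))"
  using assms unfolding valid_def by blast

lemma valid_imp_left:
  fixes D A B :: diagram
  assumes sem_D: "\<And>(H :: 'a halg) v. sem H v D = himp H (sem H v A) (sem H v B)"
    and major: "valid TYPE('a) (add_mset D \<Gamma>) {#A#}"
    and minor: "valid TYPE('a) (add_mset B \<Gamma>) \<Delta>"
  shows "valid TYPE('a) (add_mset D \<Gamma>) \<Delta>"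
  unfolding valid_def
proof (intro allI impI)
  fix H :: "'a halg" and v :: "var \<Rightarrow> 'a"
  assume H: "heyting H" and v: "range v \<subseteq> carrier H"
  interpret heyting_algebra H by (rule heyting_algebra.intro) (rule H)
  let ?sem = "sem H v"
  let ?\<Gamma> = "mmeet H (image_mset ?sem \<Gamma>)" and ?\<Delta> = "mjoin H (image_mset ?sem \<Delta>)"
  have in_carrier: "?sem A \<in> carrier H" "?sem B \<in> carrier H" "?\<Gamma> \<in> carrier H" "?\<Delta> \<in> carrier H"
    using sem_in[OF v] mmeet_in mjoin_in sem_mset_in[OF v] by blast+
  have "hle H (hmeet H (?sem D) ?\<Gamma>) (?sem A)"
    using validD[OF major H v] by (simp add: mmeet_sem_add_mset[OF v] mjoin_sem_single[OF v])
  moreover have "hle H (hmeet H (?sem B) ?\<Gamma>) ?\<Delta>"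
    using validD[OF minor H v] by (simp add: mmeet_sem_add_mset[OF v])
  ultimately have "hle H (hmeet H (?sem D) ?\<Gamma>) ?\<Delta>"
    unfolding sem_D using imp_left in_carrier by blast
  then show "hle H (mmeet H (image_mset ?sem (add_mset D \<Gamma>))) ?\<Delta>"
    by (simp add: mmeet_sem_add_mset[OF v])
qed

lemma valid_imp_right:
  fixes D A B :: diagram
  assumes sem_D: "\<And>(H :: 'a halg) v. sem H v D = himp H (sem H v A) (sem H v B)"
    and premise: "valid TYPE('a) (add_mset A \<Gamma>) {#B#}"
  shows "valid TYPE('a) \<Gamma> (add_mset D \<Delta>)"
  unfolding valid_def
proof (intro allI impI)
  fix H :: "'a halg" and v :: "var \<Rightarrow> 'a"
  assume H: "heyting H" and v: "range v \<subseteq> carrier H"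
  interpret heyting_algebra H by (rule heyting_algebra.intro) (rule H)
  let ?sem = "sem H v"
  let ?\<Gamma> = "mmeet H (image_mset ?sem \<Gamma>)" and ?\<Delta> = "mjoin H (image_mset ?sem \<Delta>)"
  have in_carrier: "?sem A \<in> carrier H" "?sem B \<in> carrier H" "?\<Gamma> \<in> carrier H" "?\<Delta> \<in> carrier H"
    using sem_in[OF v] mmeet_in mjoin_in sem_mset_in[OF v] by blast+
  have "hle H (hmeet H (?sem A) ?\<Gamma>) (?sem B)"
    using validD[OF premise H v] by (simp add: mmeet_sem_add_mset[OF v] mjoin_sem_single[OF v])
  then have "hle H ?\<Gamma> (hjoin H (?sem D) ?\<Delta>)"
    unfolding sem_D using imp_right in_carrier by blast
  then show "hle H ?\<Gamma> (mjoin H (image_mset ?sem (add_mset D \<Delta>)))"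
    by (simp add: mjoin_sem_add_mset[OF v])
qed

lemma sem_euler_venn:
  "is_euler_venn d \<Longrightarrow> sem H v (Unit d) = himp H (sem H v (Unit (E_of d))) (sem H v (Unit (V_of d)))"
  by (cases d) simp_all

theorem lemma9:
  fixes d :: unitary and \<Gamma> \<Delta> :: "diagram multiset"
  assumes "is_euler_venn d" and "wf_unitary d"
    and "\<forall>D\<in>#\<Gamma>. wf_diagram D" and "\<forall>D\<in>#\<Delta>. wf_diagram D"
  shows "(valid TYPE('a) (add_mset (Unit d) \<Gamma>) {#Unit (E_of d)#} \<and>
          valid TYPE('a) (add_mset (Unit (V_of d)) \<Gamma>) \<Delta>
          \<longrightarrow> valid TYPE('a) (add_mset (Unit d) \<Gamma>) \<Delta>)
       \<and> (valid TYPE('a) (add_mset (Unit (E_of d)) \<Gamma>) {#Unit (V_of d)#}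
          \<longrightarrow> valid TYPE('a) \<Gamma> (add_mset (Unit d) \<Delta>))"
  using valid_imp_left[of "Unit d"] valid_imp_right[of "Unit d"] sem_euler_venn[OF assms(1)]
  by blast

end
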